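(* Let $\mathbb{F}$ be a field, $0\neq h\in\mathbb{F}[x]$, $A_1$ the Weyl algebra and $A=A_h\subseteq A_1$ the unital subalgebra generated by $x$ and $\hat y=yh$. For $\alpha\in A_1$ let $F_\alpha:\mathbb{F}[x]\to A_1$ be the linear map with $F_\alpha(x^s)=\sum_{\ell=0}^{s-1}x^\ell\alpha x^{s-\ell-1}$ for $s\geq0$ (so $F_\alpha(1)=0$). Then for all $f,g\in\mathbb{F}[x]$: (a) $F_\alpha(fg)=fF_\alpha(g)+F_\alpha(f)g$; (b) if $\alpha$ commutes with $x$, then $F_\alpha(f)=\alpha f'$; (c) if $\alpha\in A$, then $F_\alpha(f)\in f'\alpha+[x,A]$.
   Context: $A_1$ is generated by $x,y$ with $yx-xy=1$. $[x,A]=\{xa-ax:a\in A\}$. $f'$ is the derivative of $f$. *)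

theory Defs
  imports "HOL-Computational_Algebra.Polynomial"
begin

text \<open>The first Weyl algebra A_1 over a field, generated by x, y with yx - xy = 1,
  realised in normal form: an element is sum_j p_j(x) y^j, stored as a polynomial in y
  (outer) whose coefficients are polynomials in x (inner), type 'a poly poly.
  Multiplication uses y^i q(x) = sum_k (i choose k) q^(k)(x) y^(i-k), an identity
  with integer coefficients valid in every characteristic.\<close>

type_synonym 'a weyl = "'a poly poly"

definition weyl_mult :: "'a::field weyl \<Rightarrow> 'a weyl \<Rightarrow> 'a weyl" (infixl "\<star>" 70) where
  "P \<star> Q = (\<Sum>i\<le>degree P. \<Sum>j\<le>degree Q. \<Sum>k\<le>i.
      monom (coeff P i * of_nat (i choose k) * (pderiv ^^ k) (coeff Q j)) (i + j - k))"

definition weyl_emb :: "'a::field poly \<Rightarrow> 'a weyl" where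
  "weyl_emb f = [:f:]"

definition weyl_x :: "'a::field weyl" where
  "weyl_x = weyl_emb [:0, 1:]"

definition weyl_y :: "'a::field weyl" where
  "weyl_y = monom 1 1"

definition weyl_scale :: "'a::field \<Rightarrow> 'a weyl \<Rightarrow> 'a weyl" where
  "weyl_scale c P = smult [:c:] P"

inductive_set weyl_sub :: "'a::field poly \<Rightarrow> 'a weyl set" for h where
  one: "1 \<in> weyl_sub h"
| gen_x: "weyl_x \<in> weyl_sub h"
| gen_yh: "weyl_y \<star> weyl_emb h \<in> weyl_sub h"
| add: "a \<in> weyl_sub h \<Longrightarrow> b \<in> weyl_sub h \<Longrightarrow> a + b \<in> weyl_sub h"
| scale: "a \<in> weyl_sub h \<Longrightarrow> weyl_scale c a \<in> weyl_sub h"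
| mult: "a \<in> weyl_sub h \<Longrightarrow> b \<in> weyl_sub h \<Longrightarrow> a \<star> b \<in> weyl_sub h"

definition weyl_F :: "'a::field weyl \<Rightarrow> 'a poly \<Rightarrow> 'a weyl" where
  "weyl_F \<alpha> f = (\<Sum>s\<le>degree f. weyl_scale (coeff f s)
      (\<Sum>l<s. weyl_emb (monom 1 l) \<star> \<alpha> \<star> weyl_emb (monom 1 (s - l - 1))))"

end

theory Submission
  imports Defs
begin

(* Right multiplication by a polynomial in x can be computed coefficientwise in y; in
   particular Z x = x Z + dZ/dy, so the commutator [x, a] is just -da/dy, and right
   multiplication by polynomials in x is associative. The map F obeys the recursion
   F(c + x f) = x F(f) + \<alpha> f, from which (a), (b) and (c) follow by induction on f;
   for (c) the same induction shows \<alpha> p \<in> p \<alpha> + [x, A] whenever \<alpha> \<in> A. *)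

lemma higher_pderiv_const: "(pderiv ^^ k) [:c:] = (if k = 0 then [:c:] else 0)"
  by (cases k) (simp_all del: funpow.simps add: funpow_Suc_right pderiv_pCons)

lemma higher_pderiv_x: "(pderiv ^^ Suc (Suc k)) [:0, 1:] = 0"
  by (simp del: funpow.simps add: funpow_Suc_right pderiv_pCons)

lemma higher_pderiv_pCons_0:
  "(pderiv ^^ k) (pCons 0 p) = pCons 0 ((pderiv ^^ k) p) + of_nat k * (pderiv ^^ (k - 1)) p"
proof (induction k)
  case (Suc k)
  then show ?case
    by (cases k) (simp_all add: pderiv_pCons pderiv_add pderiv_mult pderiv_of_nat algebra_simps)
qed simp

lemma pCons_0_sum: "pCons 0 (\<Sum>k\<in>A. f k) = (\<Sum>k\<in>A. pCons 0 (f k))"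
  by (rule poly_eqI) (simp add: coeff_sum coeff_pCons split: nat.split)

lemma smult_sum_right: "smult c (\<Sum>i\<in>A. f i) = (\<Sum>i\<in>A. smult c (f i))"
  by (rule poly_eqI) (simp add: coeff_sum sum_distrib_left)

lemma pCons_eq_const_plus: "pCons a p = [:a:] + pCons 0 p"
  by simp

lemma smult_pCons_left: "smult (pCons a p) Q = smult [:a:] Q + smult (pCons 0 p) Q"
  by (simp flip: smult_add_left)

lemma weyl_emb_mult: "weyl_emb p \<star> Q = smult p Q"
  by (rule poly_eqI) (simp add: weyl_emb_def weyl_mult_def coeff_sum coeff_eq_0)

lemma coeff_weyl_mult_emb:
  assumes "degree Q \<le> N"
  shows "coeff (Q \<star> weyl_emb p) n =
    (\<Sum>k\<le>N. coeff Q (n + k) * of_nat ((n + k) choose k) * (pderiv ^^ k) p)"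
proof -
  define c where "c i k = coeff Q i * of_nat (i choose k) * (pderiv ^^ k) p" for i k
  have "coeff (Q \<star> weyl_emb p) n = (\<Sum>i\<le>degree Q. \<Sum>k\<le>i. if i - k = n then c i k else 0)"
    unfolding c_def by (simp add: weyl_mult_def weyl_emb_def coeff_sum)
  also have "\<dots> = (\<Sum>i\<le>degree Q. \<Sum>k\<le>N. if i = n + k then c i k else 0)"
    using assms by (intro sum.cong refl sum.mono_neutral_cong_left) auto
  also have "\<dots> = (\<Sum>k\<le>N. \<Sum>i\<le>degree Q. if i = n + k then c i k else 0)"
    by (rule sum.swap)
  also have "\<dots> = (\<Sum>k\<le>N. c (n + k) k)"
    by (intro sum.cong refl) (auto simp: c_def coeff_eq_0)
  finally show ?thesis unfolding c_def .
qed

lemma weyl_mult_emb_add_left: "(P + Q) \<star> weyl_emb p = P \<star> weyl_emb p + Q \<star> weyl_emb p"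
proof (rule poly_eqI)
  fix n
  define N where "N = max (degree P) (degree Q)"
  have "degree P \<le> N" "degree Q \<le> N" "degree (P + Q) \<le> N"
    by (auto simp: N_def degree_add_le)
  then show "coeff ((P + Q) \<star> weyl_emb p) n = coeff (P \<star> weyl_emb p + Q \<star> weyl_emb p) n"
    by (simp add: coeff_weyl_mult_emb sum.distrib[symmetric] algebra_simps)
qed

lemma weyl_mult_emb_zero_left: "0 \<star> weyl_emb p = 0"
  by (simp add: weyl_mult_def)

lemma weyl_mult_emb_smult_left: "smult q Q \<star> weyl_emb p = smult q (Q \<star> weyl_emb p)"
proof (rule poly_eqI)
  fix n
  have "degree (smult q Q) \<le> degree Q" by (rule degree_smult_le)
  then show "coeff (smult q Q \<star> weyl_emb p) n = coeff (smult q (Q \<star> weyl_emb p)) n"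
    by (simp add: coeff_weyl_mult_emb[OF order.refl] coeff_weyl_mult_emb
        sum_distrib_left mult.assoc)
qed

lemma weyl_mult_emb_add_right: "Q \<star> weyl_emb (p + q) = Q \<star> weyl_emb p + Q \<star> weyl_emb q"
  by (rule poly_eqI)
     (simp add: coeff_weyl_mult_emb[OF order.refl] higher_pderiv_add
       sum.distrib[symmetric] algebra_simps)

lemma weyl_mult_emb_zero_right: "Q \<star> weyl_emb 0 = 0"
  by (rule poly_eqI) (simp add: coeff_weyl_mult_emb[OF order.refl])

lemma weyl_mult_emb_smult_right: "Q \<star> weyl_emb (smult a p) = smult [:a:] (Q \<star> weyl_emb p)"
  by (rule poly_eqI)
     (simp add: coeff_weyl_mult_emb[OF order.refl] higher_pderiv_smult sum_distrib_left algebra_simps)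

lemma weyl_mult_emb_sum_right: "Q \<star> weyl_emb (\<Sum>i\<in>A. p i) = (\<Sum>i\<in>A. Q \<star> weyl_emb (p i))"
  by (induction A rule: infinite_finite_induct)
     (simp_all add: weyl_mult_emb_zero_right weyl_mult_emb_add_right)

lemma weyl_mult_emb_const: "Q \<star> weyl_emb [:c:] = smult [:c:] Q"
  by (rule poly_eqI)
     (simp add: coeff_weyl_mult_emb[OF order.refl] sum.atMost_shift higher_pderiv_const mult.commute)

lemma weyl_mult_x: "Q \<star> weyl_x = smult [:0, 1:] Q + pderiv Q"
proof (rule poly_eqI)
  fix n
  have "coeff (Q \<star> weyl_x) n =
      (\<Sum>k\<le>Suc (Suc (degree Q)).
         coeff Q (n + k) * of_nat ((n + k) choose k) * (pderiv ^^ k) [:0, 1:])"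
    unfolding weyl_x_def by (rule coeff_weyl_mult_emb) simp
  also have "\<dots> = coeff Q n * [:0, 1:] + coeff Q (Suc n) * of_nat (Suc n)"
    by (simp only: sum.atMost_Suc_shift higher_pderiv_x) (simp add: pderiv_pCons)
  finally show "coeff (Q \<star> weyl_x) n = coeff (smult [:0, 1:] Q + pderiv Q) n"
    by (simp add: coeff_pderiv mult.commute)
qed

lemma weyl_commutator_x_eq_neg_pderiv: "weyl_x \<star> a - a \<star> weyl_x = - pderiv a"
  by (simp add: weyl_mult_x) (simp add: weyl_x_def weyl_emb_mult)

lemma weyl_mult_emb_mult_x: "Q \<star> weyl_emb p \<star> weyl_x = Q \<star> weyl_emb (pCons 0 p)"
proof (rule poly_eqI)
  fix n
  define D where "D = degree Q"
  define c where "c n k = coeff Q (n + k) * of_nat ((n + k) choose k)" for n k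
  define d where "d k = (pderiv ^^ k) p" for k
  have "coeff (Q \<star> weyl_emb p) n = (\<Sum>k\<le>Suc D. c n k * d k)"
    unfolding c_def d_def by (rule coeff_weyl_mult_emb) (simp add: D_def)
  moreover have "coeff (Q \<star> weyl_emb p) (Suc n) = (\<Sum>k\<le>D. c (Suc n) k * d k)"
    unfolding c_def d_def by (rule coeff_weyl_mult_emb) (simp add: D_def)
  moreover have "coeff (Q \<star> weyl_emb (pCons 0 p)) n =
      (\<Sum>k\<le>Suc D. c n k * (pCons 0 (d k) + of_nat k * d (k - 1)))"
    unfolding c_def d_def higher_pderiv_pCons_0[symmetric]
    by (rule coeff_weyl_mult_emb) (simp add: D_def)
  moreover have "of_nat (Suc n) * (\<Sum>k\<le>D. c (Suc n) k * d k) =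
      (\<Sum>k\<le>Suc D. c n k * (of_nat k * d (k - 1)))"
  proof -
    have "of_nat (Suc n) * c (Suc n) k = c n (Suc k) * of_nat (Suc k)" for k
    proof -
      have "of_nat (Suc n) * of_nat (Suc (k + n) choose k) =
          (of_nat (Suc (k + n) choose Suc k) * of_nat (Suc k) :: 'a poly)"
        by (metis Suc_times_binomial_add mult.commute of_nat_mult)
      then show ?thesis
        unfolding c_def
        by (simp only: add_Suc add_Suc_right add.commute[of n k]) (metis mult.left_commute mult.assoc)
    qed
    then show ?thesis
      unfolding sum.atMost_Suc_shift[of _ D] sum_distrib_left
      by (simp del: of_nat_Suc add: mult.assoc[symmetric])
  qed
  ultimately show "coeff (Q \<star> weyl_emb p \<star> weyl_x) n = coeff (Q \<star> weyl_emb (pCons 0 p)) n"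
    by (simp add: weyl_mult_x coeff_pderiv pCons_0_sum distrib_left sum.distrib)
qed

lemma weyl_mult_emb_assoc: "Q \<star> weyl_emb p \<star> weyl_emb q = Q \<star> weyl_emb (p * q)"
proof (induction q)
  case 0
  show ?case by (simp add: weyl_mult_emb_zero_right)
next
  case (pCons a q)
  have "Q \<star> weyl_emb p \<star> weyl_emb (pCons a q) =
      smult [:a:] (Q \<star> weyl_emb p) + Q \<star> weyl_emb p \<star> weyl_emb q \<star> weyl_x"
    by (subst pCons_eq_const_plus[of a q])
       (simp only: weyl_mult_emb_add_right weyl_mult_emb_const weyl_mult_emb_mult_x)
  also have "\<dots> = Q \<star> weyl_emb (p * pCons a q)"
    by (simp only: pCons.IH weyl_mult_emb_mult_x mult_pCons_right weyl_mult_emb_add_right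
        weyl_mult_emb_smult_right)
  finally show ?case .
qed

lemma weyl_mult_emb_eq_smult_if_commute_x:
  assumes "\<alpha> \<star> weyl_x = weyl_x \<star> \<alpha>"
  shows "\<alpha> \<star> weyl_emb p = smult p \<alpha>"
proof (induction p)
  case 0
  show ?case by (simp add: weyl_mult_emb_zero_right)
next
  case (pCons a p)
  have "\<alpha> \<star> weyl_emb (pCons a p) = smult [:a:] \<alpha> + smult p (\<alpha> \<star> weyl_x)"
    by (subst pCons_eq_const_plus[of a p])
       (simp only: weyl_mult_emb_add_right weyl_mult_emb_const weyl_mult_emb_mult_x[symmetric] pCons.IH
         weyl_mult_emb_smult_left[of _ _ "[:0, 1:]", folded weyl_x_def])
  also have "\<dots> = smult (pCons a p) \<alpha>"
    unfolding assms by (simp add: weyl_x_def weyl_emb_mult flip: smult_add_left)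
  finally show ?case .
qed

lemma weyl_sub_zero: "0 \<in> weyl_sub h"
  using weyl_sub.scale[OF weyl_sub.one, where c = 0] by (simp add: weyl_scale_def)

lemma weyl_sub_diff: "a \<in> weyl_sub h \<Longrightarrow> b \<in> weyl_sub h \<Longrightarrow> a - b \<in> weyl_sub h"
proof -
  assume "a \<in> weyl_sub h" "b \<in> weyl_sub h"
  then have "a + weyl_scale (-1) b \<in> weyl_sub h"
    by (intro weyl_sub.add weyl_sub.scale)
  moreover have "weyl_scale (-1) b = - b"
    unfolding weyl_scale_def
    by (metis minus_pCons one_pCons smult_1_left smult_minus_left add.inverse_neutral)
  ultimately show ?thesis by simp
qed

lemma weyl_emb_in_weyl_sub: "weyl_emb p \<in> weyl_sub h"
proof (induction p)
  case 0
  show ?case using weyl_sub_zero by (simp add: weyl_emb_def)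
next
  case (pCons a p)
  have "weyl_emb (pCons a p) = weyl_scale a 1 + weyl_x \<star> weyl_emb p"
    by (simp add: weyl_scale_def weyl_x_def weyl_emb_mult) (simp add: weyl_emb_def)
  then show ?case
    using weyl_sub.add[OF weyl_sub.scale[OF weyl_sub.one] weyl_sub.mult[OF weyl_sub.gen_x pCons.IH]]
    by simp
qed

lemma weyl_mult_emb_mod_commutators:
  assumes "\<alpha> \<in> weyl_sub h"
  shows "\<exists>b\<in>weyl_sub h. \<alpha> \<star> weyl_emb p = smult p \<alpha> - pderiv b"
proof (induction p)
  case 0
  show ?case by (intro bexI[of _ 0]) (simp_all add: weyl_sub_zero weyl_mult_emb_zero_right)
next
  case (pCons c p)
  then obtain b where b: "b \<in> weyl_sub h" and eq: "\<alpha> \<star> weyl_emb p = smult p \<alpha> - pderiv b"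
    by blast
  have "\<alpha> \<star> weyl_emb (pCons c p) = smult [:c:] \<alpha> + (smult p \<alpha> - pderiv b) \<star> weyl_x"
    by (subst pCons_eq_const_plus[of c p])
       (simp only: weyl_mult_emb_add_right weyl_mult_emb_const weyl_mult_emb_mult_x[symmetric] eq)
  also have "\<dots> = smult (pCons c p) \<alpha> - pderiv (b \<star> weyl_x - weyl_emb p \<star> \<alpha>)"
    by (simp add: weyl_mult_x weyl_emb_mult pderiv_add pderiv_smult pderiv_diff
        smult_pCons_left[of c p] smult_add_right smult_diff_right algebra_simps)
  finally show ?case
    using weyl_sub_diff[OF weyl_sub.mult[OF b weyl_sub.gen_x]
        weyl_sub.mult[OF weyl_emb_in_weyl_sub assms]]
    by blast
qed

definition weyl_F_power :: "'a::field weyl \<Rightarrow> nat \<Rightarrow> 'a weyl" where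
  "weyl_F_power \<alpha> s = (\<Sum>l<s. weyl_emb (monom 1 l) \<star> \<alpha> \<star> weyl_emb (monom 1 (s - l - 1)))"

lemma weyl_F_power_0 [simp]: "weyl_F_power \<alpha> 0 = 0"
  by (simp add: weyl_F_power_def)

lemma weyl_F_power_Suc:
  "weyl_F_power \<alpha> (Suc s) = \<alpha> \<star> weyl_emb (monom 1 s) + weyl_x \<star> weyl_F_power \<alpha> s"
proof -
  have "weyl_F_power \<alpha> (Suc s) = weyl_emb 1 \<star> \<alpha> \<star> weyl_emb (monom 1 s)
      + (\<Sum>l<s. weyl_emb (monom 1 (Suc l)) \<star> \<alpha> \<star> weyl_emb (monom 1 (s - l - 1)))"
    unfolding weyl_F_power_def sum.lessThan_Suc_shift by simp
  also have "\<dots> = \<alpha> \<star> weyl_emb (monom 1 s) + weyl_x \<star> weyl_F_power \<alpha> s"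
    by (simp add: weyl_F_power_def weyl_emb_mult weyl_x_def weyl_mult_emb_smult_left
        smult_sum_right monom_Suc)
  finally show ?thesis .
qed

lemma weyl_F_eq_sum:
  assumes "degree f \<le> N"
  shows "weyl_F \<alpha> f = (\<Sum>s\<le>N. smult [:coeff f s:] (weyl_F_power \<alpha> s))"
  unfolding weyl_F_def weyl_scale_def weyl_F_power_def[symmetric]
  using assms by (intro sum.mono_neutral_left) (auto simp: coeff_eq_0)

lemma weyl_F_zero [simp]: "weyl_F \<alpha> 0 = 0"
  by (simp add: weyl_F_def weyl_scale_def)

lemma weyl_F_add: "weyl_F \<alpha> (f + g) = weyl_F \<alpha> f + weyl_F \<alpha> g"
proof -
  define N where "N = max (degree f) (degree g)"
  have "degree f \<le> N" "degree g \<le> N" "degree (f + g) \<le> N"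
    by (auto simp: N_def degree_add_le)
  then show ?thesis
    by (simp add: weyl_F_eq_sum[of _ N] sum.distrib[symmetric] smult_add_left[symmetric])
qed

lemma weyl_F_smult: "weyl_F \<alpha> (smult a f) = smult [:a:] (weyl_F \<alpha> f)"
  using degree_smult_le[of a f]
  by (simp add: weyl_F_eq_sum[OF order.refl] weyl_F_eq_sum[of "smult a f" "degree f"]
      smult_sum_right smult_smult mult.commute)

lemma weyl_F_pCons: "weyl_F \<alpha> (pCons a f) = weyl_x \<star> weyl_F \<alpha> f + \<alpha> \<star> weyl_emb f"
proof -
  have "weyl_F \<alpha> (pCons a f) =
      (\<Sum>s\<le>Suc (degree f). smult [:coeff (pCons a f) s:] (weyl_F_power \<alpha> s))"
    by (rule weyl_F_eq_sum) (rule degree_pCons_le)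
  also have "\<dots> = (\<Sum>s\<le>degree f. smult [:coeff f s:] (weyl_F_power \<alpha> (Suc s)))"
    unfolding sum.atMost_Suc_shift by simp
  also have "\<dots> = weyl_x \<star> weyl_F \<alpha> f +
      (\<Sum>s\<le>degree f. \<alpha> \<star> weyl_emb (smult (coeff f s) (monom 1 s)))"
    by (simp add: weyl_F_power_Suc weyl_F_eq_sum[OF order.refl] smult_add_right sum.distrib
        weyl_x_def weyl_emb_mult smult_sum_right smult_smult mult.commute
        flip: weyl_mult_emb_smult_right)
  also have "\<dots> = weyl_x \<star> weyl_F \<alpha> f + \<alpha> \<star> weyl_emb f"
    by (simp only: smult_monom mult_1_right poly_as_sum_of_monoms flip: weyl_mult_emb_sum_right)
  finally show ?thesis .
qed

lemma weyl_F_mult: "weyl_F \<alpha> (f * g) = weyl_emb f \<star> weyl_F \<alpha> g + weyl_F \<alpha> f \<star> weyl_emb g"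
proof (induction f)
  case 0
  show ?case by (simp add: weyl_emb_mult weyl_mult_emb_zero_left)
next
  case (pCons a f)
  have "weyl_F \<alpha> (pCons a f * g) =
      smult [:a:] (weyl_F \<alpha> g) + weyl_x \<star> weyl_F \<alpha> (f * g) + \<alpha> \<star> weyl_emb (f * g)"
    by (simp add: weyl_F_add weyl_F_smult weyl_F_pCons)
  also have "\<dots> = weyl_emb (pCons a f) \<star> weyl_F \<alpha> g + weyl_F \<alpha> (pCons a f) \<star> weyl_emb g"
    by (simp add: pCons.IH weyl_F_pCons weyl_emb_mult weyl_x_def weyl_mult_emb_add_left
        weyl_mult_emb_smult_left weyl_mult_emb_assoc smult_add_right smult_pCons_left[of a f])
  finally show ?case .
qed

lemma weyl_F_eq_mult_pderiv_if_commute_x: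
  assumes "\<alpha> \<star> weyl_x = weyl_x \<star> \<alpha>"
  shows "weyl_F \<alpha> f = \<alpha> \<star> weyl_emb (pderiv f)"
proof (induction f)
  case 0
  show ?case by (simp add: weyl_mult_emb_zero_right)
next
  case (pCons a f)
  then show ?case
    by (simp add: weyl_F_pCons weyl_mult_emb_eq_smult_if_commute_x[OF assms]
        weyl_x_def weyl_emb_mult pderiv_pCons smult_add_left)
qed

lemma weyl_F_mod_commutators:
  assumes "\<alpha> \<in> weyl_sub h"
  shows "\<exists>a\<in>weyl_sub h. weyl_F \<alpha> f = weyl_emb (pderiv f) \<star> \<alpha> + (weyl_x \<star> a - a \<star> weyl_x)"
proof (induction f)
  case 0
  show ?case
    by (intro bexI[of _ 0]) (simp_all add: weyl_sub_zero weyl_emb_mult weyl_commutator_x_eq_neg_pderiv)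
next
  case (pCons c f)
  then obtain a where a: "a \<in> weyl_sub h" and eq_a: "weyl_F \<alpha> f = smult (pderiv f) \<alpha> - pderiv a"
    by (auto simp: weyl_emb_mult weyl_commutator_x_eq_neg_pderiv)
  obtain b where b: "b \<in> weyl_sub h" and eq_b: "\<alpha> \<star> weyl_emb f = smult f \<alpha> - pderiv b"
    using weyl_mult_emb_mod_commutators[OF assms] by blast
  have "weyl_F \<alpha> (pCons c f) = smult (pderiv (pCons c f)) \<alpha> - pderiv (weyl_x \<star> a + b)"
    by (simp add: weyl_F_pCons eq_a eq_b weyl_x_def weyl_emb_mult pderiv_add pderiv_smult
        pderiv_pCons smult_add_left smult_diff_right algebra_simps)
  then show ?case
    using weyl_sub.add[OF weyl_sub.mult[OF weyl_sub.gen_x a] b]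
    by (auto simp: weyl_emb_mult weyl_commutator_x_eq_neg_pderiv)
qed

theorem lemma3p2:
  fixes h :: "'a::field poly" and \<alpha> :: "'a weyl"
  assumes "h \<noteq> 0"
  shows "\<forall>f g :: 'a poly.
      weyl_F \<alpha> (f * g) = weyl_emb f \<star> weyl_F \<alpha> g + weyl_F \<alpha> f \<star> weyl_emb g
    \<and> (\<alpha> \<star> weyl_x = weyl_x \<star> \<alpha> \<longrightarrow> weyl_F \<alpha> f = \<alpha> \<star> weyl_emb (pderiv f))
    \<and> (\<alpha> \<in> weyl_sub h \<longrightarrow>
         (\<exists>a\<in>weyl_sub h. weyl_F \<alpha> f = weyl_emb (pderiv f) \<star> \<alpha> + (weyl_x \<star> a - a \<star> weyl_x)))"
  using weyl_F_mult weyl_F_eq_mult_pderiv_if_commute_x weyl_F_mod_commutators by blast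

end
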